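(* Let $G=(V,E)$ be a finite simple graph, $\omega\in\mathrm{Acyc}(G)$, and $P=P(G,[\omega])$ the associated toric poset with toric chamber $c(P)\subseteq\mathbb{R}^V/\mathbb{Z}^V$. Let $q\colon[0,1]^V\to\mathbb{R}^V/\mathbb{Z}^V$ be the restriction of the natural quotient map. Then the topological closure of $c(P)$ satisfies \[\overline{c(P)}=\bigcup_{\omega'\in[\omega]} q\big(\mathcal{O}(P(G,\omega'))\big).\]
   Context: $V=[n]$. $\mathrm{Acyc}(G)$ is the set of acyclic orientations of $G$; for $\omega\in\mathrm{Acyc}(G)$, $P(G,\omega)$ is the poset on $V$ obtained as the transitive (reflexive) closure of $\omega$. A flip converts a source of an acyclic orientation into a sink (reversing all edges incident to it); $\equiv$ is the equivalence relation on $\mathrm{Acyc}(G)$ generated by flips and $[\omega]$ denotes the class of $\omega$. With $q\colon\mathbb{R}^V\to\mathbb{R}^V/\mathbb{Z}^V$ the quotient map, the toric graphic arrangement $\mathcal{A}_{\mathrm{tor}}(G)$ consists of the toric hyperplanes $H^{\mathrm{tor}}_{ij}=\{x\in\mathbb{R}^V/\mathbb{Z}^V: x_i\equiv x_j \bmod 1\}$ for $\{i,j\}\in E$; its toric chambers are the connected components of the complement. For $x$ in the complement, let $\omega(x)$ orient each edge $\{i,j\}$ as $i\to j$ iff $x_i<x_j$ (coordinates taken as representatives in $[0,1)$); it is known that $x,x'$ lie in the same toric chamber iff $\omega(x)\equiv\omega(x')$, giving a bijection between toric chambers and $\mathrm{Acyc}(G)/\!\equiv$. The toric poset $P(G,[\omega])$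 is identified with the toric chamber $c(P)$ corresponding to $[\omega]$. The order polytope of a poset $Q$ on $V$ is $\mathcal{O}(Q)=\{x\in[0,1]^V: x_i\le x_j \text{ whenever } i\le_Q j\}$. *)

theory Defs
  imports "HOL-Analysis.Analysis"
begin

text \<open>Vertices: a finite type 'a (playing the role of V = [n]).
 An orientation is a set of ordered pairs (i,j), meaning the arc i -> j.\<close>

definition simple_graph :: "'a set set \<Rightarrow> bool" where
  "simple_graph E \<longleftrightarrow> (\<forall>e\<in>E. \<exists>i j. i \<noteq> j \<and> e = {i, j})"

definition is_orientation :: "'a set set \<Rightarrow> ('a \<times> 'a) set \<Rightarrow> bool" where
  "is_orientation E w \<longleftrightarrow>
     (\<forall>(i,j)\<in>w. {i,j} \<in> E) \<and>
     (\<forall>i j. {i,j} \<in> E \<longrightarrow> i \<noteq> j \<longrightarrow> ((i,j) \<in> w \<longleftrightarrow> (j,i) \<notin> w))"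

definition Acyc :: "'a set set \<Rightarrow> ('a \<times> 'a) set set" where
  "Acyc E = {w. is_orientation E w \<and> acyclic w}"

text \<open>P(G,w): the reflexive transitive closure of w, as a relation (i,j) means i <= j.\<close>
definition poset_of :: "('a \<times> 'a) set \<Rightarrow> ('a \<times> 'a) set" where
  "poset_of w = w\<^sup>*"

definition is_source :: "('a \<times> 'a) set \<Rightarrow> 'a \<Rightarrow> bool" where
  "is_source w v \<longleftrightarrow> (\<forall>u. (u, v) \<notin> w)"

definition flip_at :: "('a \<times> 'a) set \<Rightarrow> 'a \<Rightarrow> ('a \<times> 'a) set" where
  "flip_at w v = {(i,j) \<in> w. i \<noteq> v \<and> j \<noteq> v} \<union> {(j,i) | i j. (i,j) \<in> w \<and> (i = v \<or> j = v)}"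

definition flip_step :: "('a \<times> 'a) set \<Rightarrow> ('a \<times> 'a) set \<Rightarrow> bool" where
  "flip_step w w' \<longleftrightarrow> (\<exists>v. is_source w v \<and> w' = flip_at w v)"

definition flip_equiv :: "'a set set \<Rightarrow> ('a \<times> 'a) set \<Rightarrow> ('a \<times> 'a) set \<Rightarrow> bool" where
  "flip_equiv E w w' \<longleftrightarrow> w \<in> Acyc E \<and> w' \<in> Acyc E \<and>
     (\<lambda>a b. a \<in> Acyc E \<and> b \<in> Acyc E \<and> (flip_step a b \<or> flip_step b a))\<^sup>*\<^sup>* w w'"

definition flip_class :: "'a set set \<Rightarrow> ('a \<times> 'a) set \<Rightarrow> ('a \<times> 'a) set set" where
  "flip_class E w = {w'. flip_equiv E w w'}"

text \<open>The torus R^V / Z^V, represented by the canonical representatives in [0,1)^V;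
 the quotient map q takes fractional parts coordinatewise, and the torus carries
 the quotient topology induced by q.\<close>
definition tor_pts :: "('a \<Rightarrow> real) set" where
  "tor_pts = {y. \<forall>i. 0 \<le> y i \<and> y i < 1}"

definition tor_q :: "('a \<Rightarrow> real) \<Rightarrow> ('a \<Rightarrow> real)" where
  "tor_q x = (\<lambda>i. frac (x i))"

lemma istopology_tor: "istopology (\<lambda>U. U \<subseteq> tor_pts \<and> open (tor_q -` U))"
  unfolding istopology_def
  by (auto simp: vimage_Union intro!: open_Union)

definition tor_top :: "('a::finite \<Rightarrow> real) topology" where
  "tor_top = topology (\<lambda>U. U \<subseteq> tor_pts \<and> open (tor_q -` U))"

definition tor_hyperplane :: "'a \<Rightarrow> 'a \<Rightarrow> ('a \<Rightarrow> real) set" where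
  "tor_hyperplane i j = {y \<in> tor_pts. y i - y j \<in> \<int>}"

definition tor_complement :: "'a set set \<Rightarrow> ('a \<Rightarrow> real) set" where
  "tor_complement E = tor_pts - (\<Union>e\<in>E. \<Union>i\<in>e. \<Union>j\<in>e. if i \<noteq> j then tor_hyperplane i j else {})"

definition tor_orient :: "'a set set \<Rightarrow> ('a \<Rightarrow> real) \<Rightarrow> ('a \<times> 'a) set" where
  "tor_orient E x = {(i,j). {i,j} \<in> E \<and> x i < x j}"

definition toric_chamber :: "'a::finite set set \<Rightarrow> ('a \<times> 'a) set \<Rightarrow> ('a \<Rightarrow> real) set" where
  "toric_chamber E w =
     \<Union>{connected_component_of_set (subtopology tor_top (tor_complement E)) x | x.
          x \<in> tor_complement E \<and> tor_orient E x \<in> flip_class E w}"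

definition order_polytope :: "('a \<times> 'a) set \<Rightarrow> ('a \<Rightarrow> real) set" where
  "order_polytope Q = {x. (\<forall>i. 0 \<le> x i \<and> x i \<le> 1) \<and> (\<forall>(i,j)\<in>Q. x i \<le> x j)}"

end

theory Submission
  imports Defs
begin

text \<open>The toric chamber of \<open>[w]\<close> is the set of points of the complement whose orientation
  is flip equivalent to \<open>w\<close>. Indeed, moving a point of the complement slightly can only push
  coordinates equal to \<open>0\<close> to just below \<open>1\<close>, which amounts to flipping sources, so this set is
  open and closed in the complement. Its closure is then the union of the closed sets
  \<open>q(\<O>(P(G,w')))\<close>, \<open>w' \<in> [w]\<close>: each of them contains the points of the chamber with orientation \<open>w'\<close>,
  and each of its points \<open>q(y)\<close> is the limit of \<open>(1 - t) y + t f\<close> as \<open>t \<rightarrow> 0\<close>, where \<open>f\<close> is a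
  strict height function of \<open>w'\<close> with values in \<open>[0,1)\<close>.\<close>

section \<open>The torus\<close>

lemma openin_tor_top: "openin tor_top U \<longleftrightarrow> U \<subseteq> tor_pts \<and> open (tor_q -` U)"
  by (simp add: tor_top_def istopology_tor)

lemma tor_q_in_tor_pts: "tor_q x \<in> tor_pts"
  by (simp add: tor_q_def tor_pts_def frac_lt_1)

lemma topspace_tor_top: "topspace tor_top = (tor_pts :: ('a::finite \<Rightarrow> real) set)"
proof -
  have "tor_q -` tor_pts = (UNIV :: ('a \<Rightarrow> real) set)" using tor_q_in_tor_pts by blast
  then have "openin tor_top (tor_pts :: ('a \<Rightarrow> real) set)" by (simp add: openin_tor_top)
  then show ?thesis by (metis openin_subset openin_tor_top openin_topspace subset_antisym)
qed

lemma tor_q_idem: "x \<in> tor_pts \<Longrightarrow> tor_q x = x"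
  by (auto simp: tor_q_def tor_pts_def frac_eq)

lemma frac_eq_iff_diff_Ints: "frac (a::real) = frac b \<longleftrightarrow> a - b \<in> \<int>"
  by (metis frac_diff_eq frac_diff_zero frac_eq_0_iff)

lemma tor_q_eq_iff: "tor_q x = tor_q y \<longleftrightarrow> (\<forall>i. x i - y i \<in> \<int>)"
  by (auto simp: tor_q_def fun_eq_iff frac_eq_iff_diff_Ints)

lemma continuous_on_coordinate_shift: "continuous_on UNIV (\<lambda>x::'a\<Rightarrow>real. \<lambda>i. x i - z i)"
  by (intro continuous_on_coordinatewise_then_product continuous_intros) auto

lemma vimage_tor_q_image:
  "tor_q -` tor_q ` B = (\<Union>z\<in>{z. \<forall>i. z i \<in> \<int>}. (\<lambda>x. \<lambda>i. x i - z i) -` B)"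
proof (intro set_eqI iffI)
  fix x assume "x \<in> tor_q -` tor_q ` B"
  then obtain b where "b \<in> B" "tor_q x = tor_q b" by auto
  then show "x \<in> (\<Union>z\<in>{z. \<forall>i. z i \<in> \<int>}. (\<lambda>x. \<lambda>i. x i - z i) -` B)"
    by (intro UN_I[of "\<lambda>i. x i - b i"]) (auto simp: tor_q_eq_iff)
next
  fix x assume "x \<in> (\<Union>z\<in>{z. \<forall>i. z i \<in> \<int>}. (\<lambda>x. \<lambda>i. x i - z i) -` B)"
  then obtain z where z: "\<forall>i. z i \<in> \<int>" "(\<lambda>i. x i - z i) \<in> B" by auto
  then have "tor_q x = tor_q (\<lambda>i. x i - z i)" by (simp add: tor_q_eq_iff)
  then show "x \<in> tor_q -` tor_q ` B" using z by auto
qed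

lemma openin_tor_q_image: "open B \<Longrightarrow> openin tor_top (tor_q ` B)"
  unfolding openin_tor_top vimage_tor_q_image
  using tor_q_in_tor_pts by (auto intro!: open_UN open_vimage continuous_on_coordinate_shift)

lemma open_coordinate_box: "open {u::'a::finite\<Rightarrow>real. \<forall>i. \<bar>u i - y i\<bar> < d}"
  unfolding Collect_all_eq
  by (intro open_INT finite ballI open_Collect_less continuous_intros continuous_on_product_coordinates)

text \<open>Near any point only finitely many integer translates of a bounded set matter, so
  the union of all its translates is closed.\<close>
lemma closed_vimage_tor_q_image:
  assumes K: "closed K" and bounded: "\<And>k i. k \<in> K \<Longrightarrow> \<bar>k i\<bar> \<le> 1"
  shows "closed (tor_q -` tor_q ` (K::('a::finite \<Rightarrow> real) set))"
  unfolding closed_def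
proof (rule open_subopen[THEN iffD2], rule ballI)
  let ?P = "tor_q -` tor_q ` K"
  fix x assume x: "x \<in> - ?P"
  define M where "M = \<lceil>\<Sum>i\<in>UNIV. \<bar>x i\<bar>\<rceil> + 3"
  define Z where "Z = (\<lambda>g i. real_of_int (g i)) ` ((UNIV::'a set) \<rightarrow>\<^sub>E {-M..M})"
  define T where "T = (\<Union>z\<in>Z. (\<lambda>x. \<lambda>i. x i - z i) -` K)"
  have "finite Z" unfolding Z_def by (intro finite_imageI finite_PiE) auto
  then have "closed T" unfolding T_def
    by (intro closed_UN ballI closed_vimage continuous_on_coordinate_shift K)
  have "Z \<subseteq> {z. \<forall>i. z i \<in> \<int>}" unfolding Z_def by auto
  then have "T \<subseteq> ?P" unfolding vimage_tor_q_image T_def by (rule UN_mono) simp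
  define N where "N = {u. \<forall>i. \<bar>u i - x i\<bar> < 1} - T"
  have "N \<subseteq> - ?P"
  proof
    fix v assume v: "v \<in> N"
    show "v \<in> - ?P"
    proof
      assume "v \<in> ?P"
      then obtain z where z: "\<forall>i. z i \<in> \<int>" "(\<lambda>i. v i - z i) \<in> K"
        unfolding vimage_tor_q_image by auto
      define g where "g i = \<lfloor>z i\<rfloor>" for i
      have zg: "z = (\<lambda>i. real_of_int (g i))"
        using z(1) unfolding g_def fun_eq_iff by (metis Ints_cases floor_of_int)
      have "-M \<le> g i \<and> g i \<le> M" for i
      proof -
        have "\<bar>v i - z i\<bar> \<le> 1" using bounded[OF z(2)] by simp
        moreover have "\<bar>v i - x i\<bar> < 1" using v unfolding N_def by auto
        moreover have "\<bar>x i\<bar> \<le> (\<Sum>i\<in>UNIV. \<bar>x i\<bar>)" by (rule member_le_sum) auto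
        moreover have "(\<Sum>i\<in>UNIV. \<bar>x i\<bar>) \<le> \<lceil>\<Sum>i\<in>UNIV. \<bar>x i\<bar>\<rceil>" by (rule le_of_int_ceiling)
        ultimately have "\<bar>real_of_int (g i)\<bar> < real_of_int M" unfolding M_def zg by linarith
        then show ?thesis by linarith
      qed
      then have "z \<in> Z" unfolding Z_def zg by (intro imageI) auto
      then have "v \<in> T" using z(2) unfolding T_def by blast
      then show False using v unfolding N_def by auto
    qed
  qed
  moreover have "open N" unfolding N_def using open_coordinate_box \<open>closed T\<close> by (rule open_Diff)
  moreover have "x \<in> N" using x \<open>T \<subseteq> ?P\<close> unfolding N_def by auto
  ultimately show "\<exists>N. open N \<and> x \<in> N \<and> N \<subseteq> - ?P" by blast
qed

lemma closedin_tor_q_image: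
  assumes "closed K" and "\<And>k i. k \<in> K \<Longrightarrow> \<bar>k i\<bar> \<le> 1"
  shows "closedin tor_top (tor_q ` (K::('a::finite \<Rightarrow> real) set))"
proof -
  have "tor_q -` (tor_pts - tor_q ` K) = - (tor_q -` tor_q ` K)" using tor_q_in_tor_pts by blast
  moreover have "closed (tor_q -` tor_q ` K)" by (rule closed_vimage_tor_q_image) (use assms in auto)
  ultimately have "openin tor_top (tor_pts - tor_q ` K)" by (simp add: openin_tor_top open_Compl)
  then show ?thesis using tor_q_in_tor_pts by (auto simp: closedin_def topspace_tor_top)
qed

lemma tor_q_in_closure_of:
  fixes g :: "real \<Rightarrow> 'a::finite \<Rightarrow> real"
  assumes g: "continuous_on UNIV g" and gA: "\<And>t. 0 < t \<Longrightarrow> t \<le> 1 \<Longrightarrow> g t \<in> A"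
    and A: "A \<subseteq> tor_pts"
  shows "tor_q (g 0) \<in> tor_top closure_of A"
  unfolding in_closure_of
proof (intro conjI allI impI)
  show "tor_q (g 0) \<in> topspace tor_top" by (simp add: topspace_tor_top tor_q_in_tor_pts)
  fix T assume T: "tor_q (g 0) \<in> T \<and> openin tor_top T"
  then have "open (g -` tor_q -` T)" by (auto simp: openin_tor_top intro: open_vimage g)
  moreover have "0 \<in> g -` tor_q -` T" using T by simp
  ultimately obtain e where e: "e > 0" "ball 0 e \<subseteq> g -` tor_q -` T"
    by (meson open_contains_ball)
  define t where "t = min (e/2) 1"
  have t: "0 < t" "t \<le> 1" "t \<in> ball 0 e" using e(1) by (auto simp: t_def dist_real_def)
  then have "tor_q (g t) \<in> T" using e(2) by blast
  moreover have "tor_q (g t) = g t" using gA[OF t(1,2)] A by (intro tor_q_idem) blast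
  ultimately show "\<exists>y. y \<in> A \<and> y \<in> T" using gA[OF t(1,2)] by metis
qed

lemma closed_order_polytope: "closed (order_polytope Q :: ('a::finite \<Rightarrow> real) set)"
  unfolding order_polytope_def case_prod_unfold Ball_def
  by (intro closed_Collect_all closed_Collect_conj closed_Collect_imp closed_Collect_le
      continuous_intros continuous_on_product_coordinates) auto

section \<open>Acyclic orientations and flips\<close>

lemma acyclic_if_strict_height:
  assumes "\<And>i j. (i,j) \<in> r \<Longrightarrow> f i < (f j::real)"
  shows "acyclic r"
proof -
  have "(a,b) \<in> r\<^sup>+ \<Longrightarrow> f a < f b" for a b
    by (induction rule: trancl_induct) (use assms in \<open>fastforce+\<close>)
  then show ?thesis unfolding acyclic_def by blast
qed

lemma acyclic_imp_strict_height:
  fixes r :: "('a::finite \<times> 'a) set"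
  assumes "acyclic r"
  obtains f :: "'a \<Rightarrow> real" where "\<And>i j. (i,j) \<in> r \<Longrightarrow> f i < f j" "\<And>i. 0 \<le> f i \<and> f i < 1"
proof
  define N where "N = real (card (UNIV::'a set)) + 1"
  define f where "f i = real (card {j. (j,i) \<in> r\<^sup>+}) / N" for i
  have "N > 0" unfolding N_def by simp
  show "f i < f j" if "(i,j) \<in> r" for i j
  proof -
    have "{k. (k,i) \<in> r\<^sup>+} \<subset> {k. (k,j) \<in> r\<^sup>+}"
      using that assms by (auto simp: acyclic_def intro: trancl_into_trancl)
    then have "card {k. (k,i) \<in> r\<^sup>+} < card {k. (k,j) \<in> r\<^sup>+}" by (rule psubset_card_mono[OF finite])
    then show ?thesis unfolding f_def using \<open>N > 0\<close> by (simp add: divide_strict_right_mono)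
  qed
  show "0 \<le> f i \<and> f i < 1" for i
  proof -
    have "card {j. (j,i) \<in> r\<^sup>+} \<le> card (UNIV::'a set)" by (rule card_mono) auto
    then show ?thesis unfolding f_def N_def by simp
  qed
qed

lemma flip_at_iff:
  "(a,b) \<in> flip_at w v \<longleftrightarrow> ((a,b) \<in> w \<and> a \<noteq> v \<and> b \<noteq> v) \<or> ((b,a) \<in> w \<and> (a = v \<or> b = v))"
  unfolding flip_at_def by blast

text \<open>After the flip the source \<open>v\<close> is a sink, so raising its height above every other
  height turns a strict height of \<open>w\<close> into one of the flipped orientation.\<close>
lemma flip_at_Acyc:
  fixes w :: "('a::finite \<times> 'a) set"
  assumes w: "w \<in> Acyc E" and src: "is_source w v"
  shows "flip_at w v \<in> Acyc E"
proof -
  have ori: "is_orientation E w" and "acyclic w" using w by (auto simp: Acyc_def)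
  have "is_orientation E (flip_at w v)"
    unfolding is_orientation_def
  proof (intro conjI allI impI ballI)
    fix p assume "p \<in> flip_at w v"
    then show "case p of (i,j) \<Rightarrow> {i,j} \<in> E"
      using ori unfolding is_orientation_def flip_at_def by (auto simp: insert_commute)
  next
    fix i j assume "{i,j} \<in> E" "i \<noteq> j"
    then show "(i,j) \<in> flip_at w v \<longleftrightarrow> (j,i) \<notin> flip_at w v"
      using ori unfolding is_orientation_def flip_at_iff by (metis insert_commute)
  qed
  moreover have "acyclic (flip_at w v)"
  proof -
    obtain f where f: "\<And>i j. (i,j) \<in> w \<Longrightarrow> f i < (f j::real)" "\<And>i. 0 \<le> f i \<and> f i < 1"
      using acyclic_imp_strict_height[OF \<open>acyclic w\<close>] by blast
    show ?thesis
    proof (rule acyclic_if_strict_height[of _ "f(v := 1)"])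
      fix i j assume "(i,j) \<in> flip_at w v"
      then consider "(i,j) \<in> w" "i \<noteq> v" "j \<noteq> v" | "(j,i) \<in> w" "j = v" "i \<noteq> v"
        using src f(1) unfolding flip_at_iff is_source_def by blast
      then show "(f(v := 1)) i < (f(v := 1)) j" by cases (use f in auto)
    qed
  qed
  ultimately show ?thesis by (simp add: Acyc_def)
qed

lemma flip_equiv_refl: "w \<in> Acyc E \<Longrightarrow> flip_equiv E w w"
  unfolding flip_equiv_def by simp

lemma flip_equiv_trans: "flip_equiv E a b \<Longrightarrow> flip_equiv E b c \<Longrightarrow> flip_equiv E a c"
  unfolding flip_equiv_def by (blast intro: rtranclp_trans)

lemma flip_equiv_sym: "flip_equiv E a b \<Longrightarrow> flip_equiv E b a"
proof -
  let ?step = "\<lambda>a b. a \<in> Acyc E \<and> b \<in> Acyc E \<and> (flip_step a b \<or> flip_step b a)"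
  have "symp ?step\<^sup>*\<^sup>*" by (rule symp_rtranclp) (auto simp: symp_def)
  then show "flip_equiv E a b \<Longrightarrow> flip_equiv E b a"
    unfolding flip_equiv_def by (auto simp: symp_def)
qed

lemma flip_equiv_flip_at:
  fixes w :: "('a::finite \<times> 'a) set"
  assumes "w \<in> Acyc E" and "is_source w v"
  shows "flip_equiv E w (flip_at w v)"
  using assms flip_at_Acyc[OF assms] unfolding flip_equiv_def flip_step_def by auto

definition flip_set :: "('a \<times> 'a) set \<Rightarrow> 'a set \<Rightarrow> ('a \<times> 'a) set" where
  "flip_set w W = {(i,j) \<in> w. i \<notin> W \<and> j \<notin> W} \<union> {(j,i) | i j. (i,j) \<in> w \<and> (i \<in> W \<or> j \<in> W)}"

lemma flip_set_iff:
  "(a,b) \<in> flip_set w W \<longleftrightarrow> ((a,b) \<in> w \<and> a \<notin> W \<and> b \<notin> W) \<or> ((b,a) \<in> w \<and> (a \<in> W \<or> b \<in> W))"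
  unfolding flip_set_def by blast

text \<open>Sources are pairwise nonadjacent, so they can be flipped one after the other.\<close>
lemma flip_equiv_flip_set:
  fixes w :: "('a::finite \<times> 'a) set"
  assumes "w \<in> Acyc E" and "\<forall>v\<in>W. is_source w v"
  shows "flip_equiv E w (flip_set w W)"
  using finite[of W] assms(2)
proof (induction W rule: finite_induct)
  case empty
  then show ?case using assms(1) by (simp add: flip_set_def flip_equiv_refl)
next
  case (insert v W)
  then have IH: "flip_equiv E w (flip_set w W)" by simp
  have "is_source (flip_set w W) v"
    using insert.prems insert.hyps(2) unfolding flip_set_iff is_source_def by blast
  moreover have "flip_at (flip_set w W) v = flip_set w (insert v W)"
    using insert.prems insert.hyps(2) by (auto simp: set_eq_iff flip_at_iff flip_set_iff is_source_def)
  moreover have "flip_set w W \<in> Acyc E" using IH unfolding flip_equiv_def by blast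
  ultimately show ?case using IH flip_equiv_flip_at flip_equiv_trans by metis
qed

section \<open>Orientations of points of the torus\<close>

lemma simple_graph_edge_neq: "simple_graph E \<Longrightarrow> {a,b} \<in> E \<Longrightarrow> a \<noteq> b"
  unfolding simple_graph_def by (metis doubleton_eq_iff insert_absorb2)

lemma diff_Ints_iff_eq:
  assumes "0 \<le> (a::real)" "a < 1" "0 \<le> b" "b < 1"
  shows "a - b \<in> \<int> \<longleftrightarrow> a = b"
proof
  assume "a - b \<in> \<int>"
  then obtain n where n: "a - b = of_int n" by (auto elim: Ints_cases)
  then have "n = 0" using assms by linarith
  then show "a = b" using n by simp
qed simp

lemma tor_complement_subset: "tor_complement E \<subseteq> tor_pts"
  unfolding tor_complement_def by blast

lemma tor_complement_iff:
  assumes "simple_graph E"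
  shows "y \<in> tor_complement E \<longleftrightarrow> y \<in> tor_pts \<and> (\<forall>i j. {i,j} \<in> E \<longrightarrow> i \<noteq> j \<longrightarrow> y i \<noteq> y j)"
proof (cases "y \<in> tor_pts")
  case True
  then have "y \<in> tor_hyperplane i j \<longleftrightarrow> y i = y j" for i j
    using diff_Ints_iff_eq[of "y i" "y j"] by (simp add: tor_hyperplane_def tor_pts_def)
  then have "y \<in> (\<Union>e\<in>E. \<Union>i\<in>e. \<Union>j\<in>e. if i \<noteq> j then tor_hyperplane i j else {}) \<longleftrightarrow>
      (\<exists>e\<in>E. \<exists>i\<in>e. \<exists>j\<in>e. i \<noteq> j \<and> y i = y j)"
    by (auto split: if_splits)
  also have "\<dots> \<longleftrightarrow> (\<exists>i j. {i,j} \<in> E \<and> i \<noteq> j \<and> y i = y j)"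
  proof
    assume "\<exists>e\<in>E. \<exists>i\<in>e. \<exists>j\<in>e. i \<noteq> j \<and> y i = y j"
    then obtain e i j where e: "e \<in> E" "i \<in> e" "j \<in> e" "i \<noteq> j" "y i = y j" by blast
    moreover obtain a b where "e = {a,b}" using assms e(1) unfolding simple_graph_def by blast
    ultimately show "\<exists>i j. {i,j} \<in> E \<and> i \<noteq> j \<and> y i = y j" by (metis insert_commute insertE singletonD)
  qed blast
  finally show ?thesis using True unfolding tor_complement_def by blast
qed (simp add: tor_complement_def)

lemma tor_orient_Acyc:
  assumes "simple_graph E" and "y \<in> tor_complement E"
  shows "tor_orient E y \<in> Acyc E"
proof -
  have "is_orientation E (tor_orient E y)"
    using assms tor_complement_iff[OF assms(1)]
    by (auto simp: is_orientation_def tor_orient_def insert_commute) (metis linorder_neqE_linordered_idom)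
  moreover have "acyclic (tor_orient E y)"
    by (rule acyclic_if_strict_height[of _ y]) (auto simp: tor_orient_def)
  ultimately show ?thesis by (simp add: Acyc_def)
qed

lemma tor_orient_eq_if_strict_height:
  assumes "is_orientation E w" and "\<And>i j. (i,j) \<in> w \<Longrightarrow> x i < x j"
  shows "tor_orient E x = w"
proof (intro set_eqI iffI; clarify)
  fix a b assume "(a,b) \<in> tor_orient E x"
  then have "{a,b} \<in> E" "x a < x b" by (auto simp: tor_orient_def)
  then show "(a,b) \<in> w" using assms unfolding is_orientation_def by (metis less_asym less_irrefl)
next
  fix a b assume "(a,b) \<in> w"
  then show "(a,b) \<in> tor_orient E x" using assms unfolding is_orientation_def tor_orient_def by blast
qed

lemma in_tor_complement_if_strict_height:
  assumes "simple_graph E" "is_orientation E w" and "x \<in> tor_pts"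
    and "\<And>i j. (i,j) \<in> w \<Longrightarrow> x i < x j"
  shows "x \<in> tor_complement E"
  using assms unfolding tor_complement_iff[OF assms(1)] is_orientation_def
  by (metis less_irrefl)

lemma in_order_polytope_tor_orient:
  assumes "y \<in> tor_pts"
  shows "y \<in> order_polytope (poset_of (tor_orient E y))"
proof -
  have "(i,j) \<in> (tor_orient E y)\<^sup>* \<Longrightarrow> y i \<le> y j" for i j
    by (induction rule: rtrancl_induct) (auto simp: tor_orient_def)
  then show ?thesis using assms unfolding order_polytope_def poset_of_def tor_pts_def
    by (auto simp: less_imp_le)
qed

section \<open>Local structure of the complement\<close>

lemma tor_q_near_coordinate:
  assumes "0 \<le> y i" "\<bar>u i - y i\<bar> < d" "2*d < 1 - y i" "0 < y i \<Longrightarrow> 2*d < y i"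
  shows "tor_q u i = (if y i = 0 \<and> u i < 0 then u i + 1 else u i)"
proof (cases "y i = 0 \<and> u i < 0")
  case True
  then show ?thesis using assms unfolding tor_q_def by (auto simp: frac_unique_iff)
next
  case False
  then have "0 \<le> u i \<and> u i < 1" using assms by (cases "y i = 0") (auto simp: abs_less_iff)
  then show ?thesis using False unfolding tor_q_def by (simp add: frac_eq)
qed

text \<open>Moving a point of the complement by less than half of the gaps between its coordinates
  (and between them and \<open>0\<close>, \<open>1\<close>) only pushes coordinates equal to \<open>0\<close> to just below \<open>1\<close>, that is,
  it flips some of the sources.\<close>
lemma tor_orient_tor_q_near:
  assumes sg: "simple_graph E" and y: "y \<in> tor_complement E"
    and gap: "\<And>i j. y i < y j \<Longrightarrow> 2*d < y j - y i" "\<And>i. 2*d < 1 - y i" "\<And>i. 0 < y i \<Longrightarrow> 2*d < y i"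
    and u: "\<And>i. \<bar>u i - y i\<bar> < d"
  shows "tor_orient E (tor_q u) = flip_set (tor_orient E y) {i. y i = 0 \<and> u i < 0}"
proof -
  let ?W = "{i. y i = 0 \<and> u i < 0}"
  have y01: "0 \<le> y i \<and> y i < 1" for i
    using y unfolding tor_complement_iff[OF sg] tor_pts_def by blast
  have ne: "\<And>i j. {i,j} \<in> E \<Longrightarrow> i \<noteq> j \<Longrightarrow> y i \<noteq> y j"
    using y unfolding tor_complement_iff[OF sg] by blast
  have q: "tor_q u i = (if i \<in> ?W then u i + 1 else u i)" for i
    using tor_q_near_coordinate[of y i u d, OF _ u gap(2,3)] y01[of i] by simp
  have lin: "u i < u j" if "y i < y j" for i j
    using gap(1)[OF that] u[of i] u[of j] by (simp add: abs_less_iff)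
  have wrap: "u i < u j + 1" if "i \<notin> ?W" "j \<in> ?W" for i j
    using that gap(2)[of i] u[of i] u[of j] by (simp add: abs_less_iff)
  have order: "tor_q u a < tor_q u b \<longleftrightarrow> (if a \<in> ?W \<or> b \<in> ?W then y b < y a else y a < y b)"
    if "y a \<noteq> y b" for a b
    using that[unfolded linorder_neq_iff] y01[of a] y01[of b] lin[of a b] lin[of b a] wrap[of a b] wrap[of b a]
    unfolding q by (cases "a \<in> ?W"; cases "b \<in> ?W") auto
  show ?thesis
  proof (intro set_eqI; clarify)
    fix a b
    show "(a,b) \<in> tor_orient E (tor_q u) \<longleftrightarrow> (a,b) \<in> flip_set (tor_orient E y) ?W"
    proof (cases "{a,b} \<in> E")
      case True
      then have "y a \<noteq> y b" using ne simple_graph_edge_neq[OF sg] by blast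
      then show ?thesis using True order[of a b]
        by (auto simp: flip_set_iff tor_orient_def insert_commute)
    qed (auto simp: flip_set_iff tor_orient_def insert_commute)
  qed
qed

lemma exists_coordinate_gap:
  fixes y :: "'a::finite \<Rightarrow> real"
  assumes "y \<in> tor_pts"
  obtains d where "0 < d" "\<And>i j. y i < y j \<Longrightarrow> 2*d < y j - y i" "\<And>i. 2*d < 1 - y i"
    "\<And>i. 0 < y i \<Longrightarrow> 2*d < y i"
proof
  define D where
    "D = (\<lambda>(i,j). y j - y i) ` {(i,j). y i < y j} \<union> range (\<lambda>i. 1 - y i) \<union> y ` {i. 0 < y i}"
  have "finite D" "D \<noteq> {}" unfolding D_def by auto
  moreover have "\<forall>x\<in>D. 0 < x" using assms unfolding D_def tor_pts_def by auto
  ultimately have "0 < Min D" by simp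
  then show "0 < Min D / 3" by simp
  have "2 * (Min D / 3) < x" if "x \<in> D" for x
    using Min_le[OF \<open>finite D\<close> that] \<open>0 < Min D\<close> by linarith
  then show "\<And>i j. y i < y j \<Longrightarrow> 2 * (Min D / 3) < y j - y i" "\<And>i. 2 * (Min D / 3) < 1 - y i"
    "\<And>i. 0 < y i \<Longrightarrow> 2 * (Min D / 3) < y i"
    unfolding D_def by (force intro: image_eqI)+
qed

lemma flip_equiv_near:
  fixes E :: "'a::finite set set"
  assumes sg: "simple_graph E" and y: "y \<in> tor_complement E"
  obtains U where "openin tor_top U" "y \<in> U"
    "\<And>y'. y' \<in> U \<Longrightarrow> flip_equiv E (tor_orient E y) (tor_orient E y')"
proof -
  have yp: "y \<in> tor_pts" using y tor_complement_subset by blast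
  obtain d where d: "0 < d" "\<And>i j. y i < y j \<Longrightarrow> 2*d < y j - y i" "\<And>i. 2*d < 1 - y i"
    "\<And>i. 0 < y i \<Longrightarrow> 2*d < y i"
    using exists_coordinate_gap[OF yp] by blast
  define B where "B = {u. \<forall>i. \<bar>u i - y i\<bar> < d}"
  show ?thesis
  proof
    show "openin tor_top (tor_q ` B)" unfolding B_def by (rule openin_tor_q_image[OF open_coordinate_box])
    show "y \<in> tor_q ` B"
      unfolding B_def using \<open>0 < d\<close> by (intro image_eqI[where x = y]) (simp_all add: tor_q_idem[OF yp])
  next
    fix y' assume "y' \<in> tor_q ` B"
    then obtain u where u: "\<And>i. \<bar>u i - y i\<bar> < d" and y': "y' = tor_q u" unfolding B_def by blast
    have "\<forall>v\<in>{i. y i = 0 \<and> u i < 0}. is_source (tor_orient E y) v"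
      using yp by (auto simp: is_source_def tor_orient_def tor_pts_def not_less)
    moreover have "tor_orient E y' = flip_set (tor_orient E y) {i. y i = 0 \<and> u i < 0}"
      unfolding y' using tor_orient_tor_q_near[OF sg y d(2-4) u] .
    ultimately show "flip_equiv E (tor_orient E y) (tor_orient E y')"
      using flip_equiv_flip_set[OF tor_orient_Acyc[OF sg y]] by simp
  qed
qed

section \<open>The toric chamber and its closure\<close>

lemma openin_subtopology_locally_constant:
  assumes "\<And>y. y \<in> C \<Longrightarrow> \<exists>U. openin X U \<and> y \<in> U \<and> (\<forall>y'\<in>U \<inter> C. P y' = P y)"
  shows "openin (subtopology X C) {y \<in> C. P y}"
proof (rule openin_subopen[THEN iffD2], intro ballI)
  fix y assume y: "y \<in> {y \<in> C. P y}"
  then obtain U where U: "openin X U" "y \<in> U" "\<forall>y'\<in>U \<inter> C. P y' = P y" using assms by blast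
  show "\<exists>T. openin (subtopology X C) T \<and> y \<in> T \<and> T \<subseteq> {y \<in> C. P y}"
  proof (intro exI conjI)
    show "openin (subtopology X C) (U \<inter> C)" using U(1) by (rule openin_subtopology_Int)
    show "y \<in> U \<inter> C" "U \<inter> C \<subseteq> {y \<in> C. P y}" using y U(2,3) by blast+
  qed
qed

lemma toric_chamber_eq:
  fixes E :: "'a::finite set set"
  assumes sg: "simple_graph E"
  shows "toric_chamber E w = {y \<in> tor_complement E. flip_equiv E w (tor_orient E y)}"
proof -
  define C where "C = tor_complement E"
  define X where "X = subtopology tor_top C"
  define S where "S = {y \<in> C. flip_equiv E w (tor_orient E y)}"
  have topX: "topspace X = C"
    unfolding X_def C_def using tor_complement_subset[of E] by (simp add: topspace_tor_top Int_absorb1)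
  have near: "\<exists>U. openin tor_top U \<and> y \<in> U \<and>
      (\<forall>y'\<in>U \<inter> C. flip_equiv E w (tor_orient E y') = flip_equiv E w (tor_orient E y))"
    if y: "y \<in> C" for y
  proof -
    obtain U where "openin tor_top U" "y \<in> U"
      and U: "\<And>y'. y' \<in> U \<Longrightarrow> flip_equiv E (tor_orient E y) (tor_orient E y')"
      using flip_equiv_near[OF sg y[unfolded C_def]] by blast
    moreover have "flip_equiv E w (tor_orient E y') = flip_equiv E w (tor_orient E y)" if "y' \<in> U" for y'
      using flip_equiv_trans[OF _ U[OF that]] flip_equiv_trans[OF _ flip_equiv_sym[OF U[OF that]]] by blast
    ultimately show ?thesis by blast
  qed
  have "openin X S"
    unfolding X_def S_def by (rule openin_subtopology_locally_constant) (rule near)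
  moreover have "openin X (topspace X - S)"
  proof -
    have "topspace X - S = {y \<in> C. \<not> flip_equiv E w (tor_orient E y)}" unfolding topX S_def by blast
    also have "openin X \<dots>"
      unfolding X_def by (rule openin_subtopology_locally_constant) (use near in auto)
    finally show ?thesis .
  qed
  moreover have "S \<subseteq> topspace X" unfolding topX S_def by blast
  ultimately have clopen: "closedin X S" "openin X S" by (auto simp: closedin_def)
  have component: "connected_component_of_set X x \<subseteq> S" if "x \<in> S" for x
  proof -
    have "x \<in> connected_component_of_set X x"
      using that topX by (simp add: connected_component_of_refl S_def)
    then show ?thesis
      using connectedin_clopen_cases[OF connectedin_connected_component_of[of X x] clopen] that
      by (auto simp: disjnt_iff)
  qed
  have "toric_chamber E w = \<Union>{connected_component_of_set X x | x. x \<in> S}"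
    unfolding toric_chamber_def flip_class_def X_def C_def S_def by simp
  also have "\<dots> = S"
    using component connected_component_of_refl[of X] topX unfolding S_def by blast
  finally show ?thesis unfolding S_def C_def .
qed

lemma closedin_tor_q_order_polytopes:
  "closedin tor_top (\<Union>w\<in>W. tor_q ` order_polytope (poset_of w) :: ('a::finite \<Rightarrow> real) set)"
proof (intro closedin_Union finite_imageI finite, clarify)
  fix w
  show "closedin tor_top (tor_q ` order_polytope (poset_of w) :: ('a \<Rightarrow> real) set)"
    by (rule closedin_tor_q_image[OF closed_order_polytope]) (auto simp: order_polytope_def)
qed

lemma toric_chamber_subset_tor_q_order_polytopes:
  fixes E :: "'a::finite set set"
  assumes "simple_graph E"
  shows "toric_chamber E w \<subseteq> (\<Union>w'\<in>flip_class E w. tor_q ` order_polytope (poset_of w'))"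
proof
  fix y assume "y \<in> toric_chamber E w"
  then have y: "y \<in> tor_complement E" "tor_orient E y \<in> flip_class E w"
    unfolding toric_chamber_eq[OF assms] flip_class_def by auto
  then have "y \<in> tor_pts" using tor_complement_subset by blast
  then have "y \<in> tor_q ` order_polytope (poset_of (tor_orient E y))"
    using in_order_polytope_tor_orient tor_q_idem by (metis image_eqI)
  then show "y \<in> (\<Union>w'\<in>flip_class E w. tor_q ` order_polytope (poset_of w'))" using y(2) by blast
qed

lemma tor_q_order_polytope_subset_closure:
  fixes E :: "'a::finite set set"
  assumes sg: "simple_graph E" and w': "w' \<in> flip_class E w"
  shows "tor_q ` order_polytope (poset_of w') \<subseteq> tor_top closure_of toric_chamber E w"
proof
  fix p assume "p \<in> tor_q ` order_polytope (poset_of w')"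
  then obtain y where y: "y \<in> order_polytope (poset_of w')" and p: "p = tor_q y" by blast
  have y01: "0 \<le> y i \<and> y i \<le> 1" for i using y unfolding order_polytope_def by blast
  have ymono: "y i \<le> y j" if "(i,j) \<in> w'" for i j
    using y that unfolding order_polytope_def poset_of_def by blast
  have "flip_equiv E w w'" using w' unfolding flip_class_def by blast
  then have "w' \<in> Acyc E" unfolding flip_equiv_def by blast
  then have ori: "is_orientation E w'" and "acyclic w'" by (auto simp: Acyc_def)
  obtain f where f: "\<And>i j. (i,j) \<in> w' \<Longrightarrow> f i < (f j::real)" "\<And>i. 0 \<le> f i \<and> f i < 1"
    using acyclic_imp_strict_height[OF \<open>acyclic w'\<close>] by blast
  define g where "g t = (\<lambda>i. (1 - t) * y i + t * f i)" for t :: real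
  have "continuous_on UNIV g"
    unfolding g_def by (intro continuous_on_coordinatewise_then_product continuous_intros)
  moreover have "g t \<in> toric_chamber E w" if t: "0 < t" "t \<le> 1" for t
  proof -
    have strict: "g t i < g t j" if "(i,j) \<in> w'" for i j
      using mult_left_mono[OF ymono[OF that], of "1 - t"] mult_strict_left_mono[OF f(1)[OF that] t(1)] t
      unfolding g_def by linarith
    have "(1 - t) * y i \<le> 1 - t" "t * f i < t" "0 \<le> (1 - t) * y i" "0 \<le> t * f i" for i
      using y01[of i] f(2)[of i] t by (simp_all add: mult_left_le mult_strict_left_mono[of _ 1, simplified])
    then have "g t \<in> tor_pts" unfolding g_def tor_pts_def by (smt (verit) mem_Collect_eq)
    then show ?thesis
      unfolding toric_chamber_eq[OF sg]
      using in_tor_complement_if_strict_height[OF sg ori] tor_orient_eq_if_strict_height[OF ori] strict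
        \<open>flip_equiv E w w'\<close> by auto
  qed
  moreover have "toric_chamber E w \<subseteq> tor_pts"
    unfolding toric_chamber_eq[OF sg] using tor_complement_subset by blast
  ultimately have "tor_q (g 0) \<in> tor_top closure_of toric_chamber E w" by (rule tor_q_in_closure_of)
  then show "p \<in> tor_top closure_of toric_chamber E w" unfolding p by (simp add: g_def)
qed

theorem mainTheorem2:
  fixes E :: "'a::finite set set" and w :: "('a \<times> 'a) set"
  assumes "simple_graph E" and "w \<in> Acyc E"
  shows "tor_top closure_of (toric_chamber E w) =
         (\<Union>w'\<in>flip_class E w. tor_q ` order_polytope (poset_of w'))"
proof
  show "tor_top closure_of toric_chamber E w \<subseteq> (\<Union>w'\<in>flip_class E w. tor_q ` order_polytope (poset_of w'))"
    by (rule closure_of_minimal[OF toric_chamber_subset_tor_q_order_polytopes[OF assms(1)]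
          closedin_tor_q_order_polytopes])
  show "(\<Union>w'\<in>flip_class E w. tor_q ` order_polytope (poset_of w')) \<subseteq> tor_top closure_of toric_chamber E w"
    using tor_q_order_polytope_subset_closure[OF assms(1)] by blast
qed

end
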